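(* Let $G$ be a $(k+1)$-critical hypergraph with $k\ge2$, and let $F\subseteq E(G)$ be a separating edge set of $G$ with $|F|\le k$. Then $|F|=k$ and there is an edge cut $(X,Y,F)$ of $G$ with the following properties: (a) every $k$-coloring $\varphi$ of $G[X]$ satisfies $|\varphi(X_F)|=1$, and every $k$-coloring $\varphi$ of $G[Y]$ satisfies $|\varphi(Y_F)|=k$ and, for every color $i\in\{1,\dots,k\}$, there is an edge $e\in F$ with $\varphi(e\cap Y)=\{i\}$; (b) each vertex of $Y_F$ is incident to exactly one edge of $F$; (c) if $|X_F|\ge2$, then the hypergraph obtained from $G[X]$ by adding the edge $X_F$ is $(k+1)$-critical; (d) the hypergraph obtained from $G[Y]$ by adding a new vertex $v$ and, for each edge $e\in F$, the new edge $(e\setminus X)\cup\{v\}$, is $(k+1)$-critical.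
   Context: A hypergraph is a pair $G=(V,E)$ of finite sets with $E\subseteq 2^V$ and $|e|\ge2$ for all $e\in E$. A $k$-coloring is a map $V\to\{1,\dots,k\}$ such that every edge contains two vertices of different colors; $\chi$ is the chromatic number. $G$ is $(k+1)$-critical if $\chi(G)=k+1$ but $\chi(H)\le k$ for every proper subhypergraph $H$. $G[X]$ has vertex set $X$ and the edges of $G$ contained in $X$. For $X\subseteq V(G)$, $\partial_G(X)$ is the set of edges meeting both $X$ and $V(G)\setminus X$. A separating edge set is a set $F\subseteq E(G)$ such that $G-F$ has more (connected) components than $G$. An edge cut of $G$ is a triple $(X,Y,F)$ with $X$ a non-empty proper subset of $V(G)$, $Y=V(G)\setminus X$, and $F=\partial_G(X)$; then $X_F$ (resp. $Y_F$) denotes the set of vertices of $X$ (resp. $Y$) incident to some edge of $F$. *)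

theory Defs
  imports Main
begin

definition hypergraph :: "'a set \<Rightarrow> 'a set set \<Rightarrow> bool" where
  "hypergraph V E \<longleftrightarrow> finite V \<and> E \<subseteq> Pow V \<and> (\<forall>e\<in>E. card e \<ge> 2)"

definition is_coloring :: "nat \<Rightarrow> 'a set \<Rightarrow> 'a set set \<Rightarrow> ('a \<Rightarrow> nat) \<Rightarrow> bool" where
  "is_coloring k V E f \<longleftrightarrow> (\<forall>v\<in>V. f v \<in> {1..k}) \<and> (\<forall>e\<in>E. \<exists>u\<in>e. \<exists>w\<in>e. f u \<noteq> f w)"

definition colorable :: "nat \<Rightarrow> 'a set \<Rightarrow> 'a set set \<Rightarrow> bool" where
  "colorable k V E \<longleftrightarrow> (\<exists>f. is_coloring k V E f)"

definition chi :: "'a set \<Rightarrow> 'a set set \<Rightarrow> nat" where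
  "chi V E = (LEAST k. colorable k V E)"

definition proper_subhypergraph :: "'a set \<Rightarrow> 'a set set \<Rightarrow> 'a set \<Rightarrow> 'a set set \<Rightarrow> bool" where
  "proper_subhypergraph V' E' V E \<longleftrightarrow>
     hypergraph V' E' \<and> V' \<subseteq> V \<and> E' \<subseteq> E \<and> (V', E') \<noteq> (V, E)"

definition critical :: "nat \<Rightarrow> 'a set \<Rightarrow> 'a set set \<Rightarrow> bool" where
  "critical c V E \<longleftrightarrow> hypergraph V E \<and> chi V E = c \<and>
     (\<forall>V' E'. proper_subhypergraph V' E' V E \<longrightarrow> chi V' E' < c)"

definition induced_edges :: "'a set set \<Rightarrow> 'a set \<Rightarrow> 'a set set" where
  "induced_edges E X = {e \<in> E. e \<subseteq> X}"

definition boundary :: "'a set \<Rightarrow> 'a set set \<Rightarrow> 'a set \<Rightarrow> 'a set set" where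
  "boundary V E X = {e \<in> E. e \<inter> X \<noteq> {} \<and> e \<inter> (V - X) \<noteq> {}}"

definition adj :: "'a set \<Rightarrow> 'a set set \<Rightarrow> ('a \<times> 'a) set" where
  "adj V E = {(u, w). u \<in> V \<and> w \<in> V \<and> (\<exists>e\<in>E. u \<in> e \<and> w \<in> e)}"

definition components :: "'a set \<Rightarrow> 'a set set \<Rightarrow> 'a set set" where
  "components V E = V // ((adj V E)\<^sup>* \<inter> (V \<times> V))"

definition separating_edge_set :: "'a set \<Rightarrow> 'a set set \<Rightarrow> 'a set set \<Rightarrow> bool" where
  "separating_edge_set V E F \<longleftrightarrow> F \<subseteq> E \<and> card (components V (E - F)) > card (components V E)"

end

theory Submission
  imports Defs "HOL-Combinatorics.Permutations"
begin

text \<open>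
  Removing \<open>F\<close> disconnects \<open>G\<close>, so some nonempty proper \<open>X\<close> has \<open>\<partial>X \<subseteq> F\<close>; put
  \<open>Y = V - X\<close>. By criticality \<open>G[X]\<close> and \<open>G[Y]\<close> have \<open>k\<close>-colorings \<open>\<phi>\<close> and \<open>\<psi>\<close>, and
  gluing \<open>\<phi>\<close> to \<open>\<sigma> \<circ> \<psi>\<close>, for any permutation \<open>\<sigma>\<close> of the colors, leaves a monochromatic
  edge, necessarily in \<open>\<partial>X\<close>. The \<open>k\<close> cyclic shifts \<open>\<sigma>\<close> yield \<open>k\<close> different such edges,
  so \<open>\<partial>X = F\<close>, \<open>|F| = k\<close>, and for every \<open>\<sigma>\<close> exactly one edge of \<open>F\<close> is monochromatic.
  Hence each side of each edge of \<open>F\<close> is monochromatic, and choosing \<open>\<sigma>\<close> to match two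
  edges shows that two edges of \<open>F\<close> get equal \<open>Y\<close>-colors iff they get different
  \<open>X\<close>-colors. So, after possibly swapping \<open>X\<close> and \<open>Y\<close>, every coloring of \<open>G[X]\<close> is
  constant on \<open>X \<inter> \<Union>F\<close> and every coloring of \<open>G[Y]\<close> gives the edges of \<open>F\<close> all \<open>k\<close>
  colors. Properties (a)-(d) follow by recoloring.
\<close>

section \<open>Colorings and critical hypergraphs\<close>

lemma is_coloring_mono: "is_coloring j V E f \<Longrightarrow> j \<le> k \<Longrightarrow> is_coloring k V E f"
  unfolding is_coloring_def by auto

lemma colorable_mono: "colorable j V E \<Longrightarrow> j \<le> k \<Longrightarrow> colorable k V E"
  unfolding colorable_def using is_coloring_mono by blast

lemma is_coloring_subset:
  "is_coloring k W D c \<Longrightarrow> V' \<subseteq> W \<Longrightarrow> E' \<subseteq> D \<Longrightarrow> is_coloring k V' E' c"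
  unfolding is_coloring_def by blast

lemma is_coloring_compose:
  assumes c: "is_coloring k S D \<psi>" and \<sigma>: "inj_on \<sigma> {1..k}" "\<sigma> ` {1..k} \<subseteq> {1..k}"
    and D: "D \<subseteq> Pow S"
  shows "is_coloring k S D (\<sigma> \<circ> \<psi>)"
  unfolding is_coloring_def
proof (intro conjI ballI)
  fix v assume "v \<in> S"
  then have "\<psi> v \<in> {1..k}" using c unfolding is_coloring_def by blast
  then show "(\<sigma> \<circ> \<psi>) v \<in> {1..k}" using \<sigma>(2) unfolding comp_apply by blast
next
  fix e assume e: "e \<in> D"
  then obtain u w where uw: "u \<in> e" "w \<in> e" "\<psi> u \<noteq> \<psi> w"
    using c unfolding is_coloring_def by blast
  moreover have "\<psi> u \<in> {1..k}" "\<psi> w \<in> {1..k}"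
    using uw e D c unfolding is_coloring_def by auto
  ultimately have "\<sigma> (\<psi> u) \<noteq> \<sigma> (\<psi> w)" using \<sigma>(1) by (metis inj_onD)
  then show "\<exists>u\<in>e. \<exists>w\<in>e. (\<sigma> \<circ> \<psi>) u \<noteq> (\<sigma> \<circ> \<psi>) w" using uw by auto
qed

lemma two_le_cardE:
  assumes "2 \<le> card e" obtains u w where "u \<in> e" "w \<in> e" "u \<noteq> w"
proof -
  have "finite e" using assms card.infinite by fastforce
  then show ?thesis using assms that card_le_Suc0_iff_eq[of e] by fastforce
qed

lemma hypergraph_colorable:
  assumes "hypergraph V E" shows "\<exists>n. colorable n V E"
proof -
  from assms have "finite V" and EV: "E \<subseteq> Pow V" and card: "\<forall>e\<in>E. 2 \<le> card e"
    unfolding hypergraph_def by auto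
  obtain f and n :: nat where f: "f ` V = {i. i < n}" "inj_on f V"
    using finite_imp_inj_to_nat_seg[OF \<open>finite V\<close>] by blast
  have "is_coloring n V E (\<lambda>v. f v + 1)"
    unfolding is_coloring_def
  proof (intro conjI ballI)
    fix v assume "v \<in> V"
    then have "f v < n" using f(1) by blast
    then show "f v + 1 \<in> {1..n}" by simp
  next
    fix e assume e: "e \<in> E"
    then have "2 \<le> card e" using card by blast
    then obtain u w where uw: "u \<in> e" "w \<in> e" "u \<noteq> w" by (rule two_le_cardE)
    moreover have "u \<in> V" "w \<in> V" using uw e EV by auto
    ultimately have "f u \<noteq> f w" using f(2) by (meson inj_onD)
    then show "\<exists>u\<in>e. \<exists>w\<in>e. f u + 1 \<noteq> f w + 1" using uw by auto
  qed
  then show ?thesis unfolding colorable_def by blast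
qed

lemma chi_le: "colorable k V E \<Longrightarrow> chi V E \<le> k"
  unfolding chi_def by (rule Least_le)

lemma colorable_chi: "hypergraph V E \<Longrightarrow> colorable (chi V E) V E"
  unfolding chi_def using hypergraph_colorable by (metis LeastI_ex)

lemma critical_hypergraph: "critical c V E \<Longrightarrow> hypergraph V E"
  unfolding critical_def by blast

lemma critical_not_colorable: "critical (k + 1) V E \<Longrightarrow> \<not> colorable k V E"
  unfolding critical_def using chi_le by fastforce

lemma critical_proper_subhypergraph_colorable:
  assumes "critical (k + 1) V E" "proper_subhypergraph V' E' V E"
  shows "colorable k V' E'"
proof -
  have "chi V' E' \<le> k" using assms unfolding critical_def by fastforce
  moreover have "colorable (chi V' E') V' E'"
    using assms(2) colorable_chi unfolding proper_subhypergraph_def by blast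
  ultimately show ?thesis using colorable_mono by blast
qed

lemma critical_induced_colorable:
  assumes "critical (k + 1) V E" "S \<subseteq> V" "S \<noteq> V"
  shows "colorable k S (induced_edges E S)"
proof (rule critical_proper_subhypergraph_colorable[OF assms(1)])
  show "proper_subhypergraph S (induced_edges E S) V E"
    using critical_hypergraph[OF assms(1)] assms(2,3)
    unfolding proper_subhypergraph_def hypergraph_def induced_edges_def
    by (auto intro: finite_subset)
qed

lemma critical_edge_deleted_colorable:
  assumes "critical (k + 1) V E" "e \<in> E"
  shows "colorable k V (E - {e})"
proof (rule critical_proper_subhypergraph_colorable[OF assms(1)])
  show "proper_subhypergraph V (E - {e}) V E"
    using critical_hypergraph[OF assms(1)] assms(2) unfolding proper_subhypergraph_def hypergraph_def
    by auto
qed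

lemma critical_vertex_in_edge:
  assumes crit: "critical (k + 1) V E" and "0 < k" "v \<in> V"
  shows "\<exists>e\<in>E. v \<in> e"
proof (rule ccontr)
  assume isolated: "\<not> (\<exists>e\<in>E. v \<in> e)"
  have "proper_subhypergraph (V - {v}) E V E"
    using critical_hypergraph[OF crit] isolated \<open>v \<in> V\<close>
    unfolding proper_subhypergraph_def hypergraph_def by (auto intro: finite_subset)
  then obtain c where c: "is_coloring k (V - {v}) E c"
    using critical_proper_subhypergraph_colorable[OF crit] unfolding colorable_def by blast
  have "is_coloring k V E (c(v := 1))"
    unfolding is_coloring_def
  proof (intro conjI ballI)
    fix u assume "u \<in> V"
    then show "(c(v := 1)) u \<in> {1..k}" using c \<open>0 < k\<close> unfolding is_coloring_def by auto
  next
    fix e assume e: "e \<in> E"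
    then obtain u w where "u \<in> e" "w \<in> e" "c u \<noteq> c w" using c unfolding is_coloring_def by blast
    moreover have "u \<noteq> v" "w \<noteq> v" using isolated e calculation by auto
    ultimately show "\<exists>u\<in>e. \<exists>w\<in>e. (c(v := 1)) u \<noteq> (c(v := 1)) w" by auto
  qed
  then show False using critical_not_colorable[OF crit] unfolding colorable_def by blast
qed

lemma colorable_Suc_if_edge_deleted:
  assumes hyp: "hypergraph W D" and "f \<in> D" and "colorable k W (D - {f})"
  shows "colorable (k + 1) W D"
proof -
  obtain c where c: "is_coloring k W (D - {f}) c" using assms(3) unfolding colorable_def by blast
  have "2 \<le> card f" using \<open>f \<in> D\<close> hyp unfolding hypergraph_def by blast
  then obtain v where v: "v \<in> f" by (rule two_le_cardE)
  have "is_coloring (k + 1) W D (c(v := k + 1))"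
    unfolding is_coloring_def
  proof (intro conjI ballI)
    fix u assume "u \<in> W"
    then show "(c(v := k + 1)) u \<in> {1..k + 1}" using c unfolding is_coloring_def by auto
  next
    fix g assume g: "g \<in> D"
    show "\<exists>u\<in>g. \<exists>w\<in>g. (c(v := k + 1)) u \<noteq> (c(v := k + 1)) w"
    proof (cases "v \<in> g")
      case True
      have "2 \<le> card g" using g hyp unfolding hypergraph_def by blast
      then obtain u w where "u \<in> g" "w \<in> g" "u \<noteq> w" by (rule two_le_cardE)
      then obtain w where w: "w \<in> g" "w \<noteq> v" by blast
      then have "c w \<in> {1..k}" using g hyp c unfolding hypergraph_def is_coloring_def by blast
      then show ?thesis using True w by (intro bexI[of _ v] bexI[of _ w]) auto
    next
      case False
      then have "g \<in> D - {f}" using g v by blast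
      then obtain u w where "u \<in> g" "w \<in> g" "c u \<noteq> c w" using c unfolding is_coloring_def by blast
      then show ?thesis using False by (metis fun_upd_other)
    qed
  qed
  then show ?thesis unfolding colorable_def by blast
qed

lemma critical_intro:
  assumes hyp: "hypergraph W D" and not_colorable: "\<not> colorable k W D"
    and covered: "\<forall>v\<in>W. \<exists>f\<in>D. v \<in> f" and deleted: "\<forall>f\<in>D. colorable k W (D - {f})"
  shows "critical (k + 1) W D"
  unfolding critical_def
proof (intro conjI allI impI)
  show "hypergraph W D" by fact
  have "colorable (k + 1) W D"
  proof (cases "D = {}")
    case True
    then show ?thesis unfolding colorable_def is_coloring_def by (intro exI[of _ "\<lambda>_. 1"]) auto
  next
    case False
    then show ?thesis using colorable_Suc_if_edge_deleted hyp deleted by blast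
  qed
  then show "chi W D = k + 1"
    unfolding chi_def
  proof (rule Least_equality)
    fix j assume "colorable j W D"
    then show "k + 1 \<le> j" using not_colorable colorable_mono[of j W D k] by (cases "j \<le> k") auto
  qed
  fix V' E' assume sub: "proper_subhypergraph V' E' W D"
  have "colorable k V' E'"
  proof (cases "E' = D")
    case True
    then obtain v where "v \<in> W" "v \<notin> V'" using sub unfolding proper_subhypergraph_def by auto
    then show ?thesis using True sub covered unfolding proper_subhypergraph_def hypergraph_def by blast
  next
    case False
    then obtain f where "f \<in> D" "E' \<subseteq> D - {f}" using sub unfolding proper_subhypergraph_def by blast
    then show ?thesis using deleted sub is_coloring_subset unfolding proper_subhypergraph_def colorable_def
      by meson
  qed
  then show "chi V' E' < k + 1" using chi_le by fastforce
qed

lemma permutes_two_points: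
  assumes "a1 \<in> A" "a2 \<in> A" "b1 \<in> A" "b2 \<in> A" "b1 = b2 \<longleftrightarrow> a1 = a2"
  obtains \<sigma> where "\<sigma> permutes A" "\<sigma> b1 = a1" "\<sigma> b2 = a2"
proof
  let ?\<tau> = "transpose b1 a1"
  show "transpose (?\<tau> b2) a2 \<circ> ?\<tau> permutes A"
    using assms by (intro permutes_compose permutes_swap_id) (auto simp: transpose_def)
  show "(transpose (?\<tau> b2) a2 \<circ> ?\<tau>) b1 = a1" "(transpose (?\<tau> b2) a2 \<circ> ?\<tau>) b2 = a2"
    using assms(5) by (auto simp: transpose_def)
qed

definition cyclic_shift :: "nat \<Rightarrow> nat \<Rightarrow> nat \<Rightarrow> nat" where
  "cyclic_shift k s c = (if c + s \<le> k then c + s else c + s - k)"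

lemma cyclic_shift_0: "c \<le> k \<Longrightarrow> cyclic_shift k 0 c = c"
  unfolding cyclic_shift_def by simp

lemma cyclic_shift_inj_on: "s < k \<Longrightarrow> inj_on (cyclic_shift k s) {1..k}"
  unfolding cyclic_shift_def inj_on_def by (auto split: if_splits)

lemma cyclic_shift_image: "s < k \<Longrightarrow> cyclic_shift k s ` {1..k} \<subseteq> {1..k}"
  unfolding cyclic_shift_def by auto

lemma cyclic_shift_eq_iff:
  "c \<in> {1..k} \<Longrightarrow> s < k \<Longrightarrow> t < k \<Longrightarrow> cyclic_shift k s c = cyclic_shift k t c \<longleftrightarrow> s = t"
  unfolding cyclic_shift_def by (auto split: if_splits)

section \<open>Edge cuts\<close>

lemma boundary_of_component_subset:
  assumes "C \<in> components V (E - F)"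
  shows "boundary V E C \<subseteq> F"
proof
  fix e assume e: "e \<in> boundary V E C"
  obtain v where v: "v \<in> V" "C = ((adj V (E - F))\<^sup>* \<inter> V \<times> V) `` {v}"
    using assms unfolding components_def by (rule quotientE)
  obtain u w where u: "u \<in> e" "u \<in> C" and w: "w \<in> e" "w \<in> V" "w \<notin> C"
    using e unfolding boundary_def by blast
  have "(v, u) \<in> (adj V (E - F))\<^sup>*" "u \<in> V" using u(2) v(2) by auto
  show "e \<in> F"
  proof (rule ccontr)
    assume "e \<notin> F"
    then have "(u, w) \<in> adj V (E - F)"
      using e u w \<open>u \<in> V\<close> unfolding adj_def boundary_def by blast
    then have "(v, w) \<in> (adj V (E - F))\<^sup>*" using \<open>(v, u) \<in> _\<close> by simp
    then show False using v w by blast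
  qed
qed

lemma separating_edge_set_imp_cut:
  assumes "finite V" and sep: "separating_edge_set V E F"
  shows "\<exists>X. X \<noteq> {} \<and> X \<subset> V \<and> boundary V E X \<subseteq> F"
proof -
  have less: "card (components V E) < card (components V (E - F))"
    using sep unfolding separating_edge_set_def by blast
  have "V \<noteq> {}"
  proof
    assume "V = {}"
    then have "components V (E - F) = {}" unfolding components_def by simp
    then show False using less by simp
  qed
  have "finite (components V E)"
    unfolding components_def by (rule finite_quotient[OF assms(1)]) blast
  moreover have "components V E \<noteq> {}"
    using \<open>V \<noteq> {}\<close> unfolding components_def by simp
  ultimately have "1 \<le> card (components V E)" by (simp add: Suc_le_eq card_gt_0_iff)
  moreover have "card (components V (E - F)) \<le> 1" if "components V (E - F) \<subseteq> {V}"
    using card_mono[OF _ that] by simp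
  ultimately have "\<not> components V (E - F) \<subseteq> {V}" using less by linarith
  then obtain C where C: "C \<in> components V (E - F)" "C \<noteq> V" by blast
  obtain x where "x \<in> V" "C = ((adj V (E - F))\<^sup>* \<inter> V \<times> V) `` {x}"
    using C(1) unfolding components_def by (rule quotientE)
  then have "C \<noteq> {}" "C \<subseteq> V" by auto
  moreover have "boundary V E C \<subseteq> F" by (rule boundary_of_component_subset[OF C(1)])
  ultimately show ?thesis using C(2) by blast
qed

section \<open>A cut with at most $k$ edges in a $(k+1)$-critical hypergraph\<close>

text \<open>The color of some vertex of \<open>e\<close> in \<open>S\<close>; meaningful once \<open>e \<inter> S\<close> is known to be
  nonempty and monochromatic.\<close>
definition side_color :: "('a \<Rightarrow> nat) \<Rightarrow> 'a set \<Rightarrow> 'a set \<Rightarrow> nat" where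
  "side_color \<phi> S e = \<phi> (SOME x. x \<in> e \<inter> S)"

lemma side_color_eq:
  assumes "x \<in> e \<inter> S" "\<forall>y\<in>e \<inter> S. \<phi> y = a"
  shows "side_color \<phi> S e = a"
proof -
  have "(SOME x. x \<in> e \<inter> S) \<in> e \<inter> S" using assms(1) by (rule someI)
  then show ?thesis unfolding side_color_def using assms(2) by blast
qed

lemma side_color_mem_image:
  assumes "e \<inter> S \<noteq> {}" shows "side_color \<phi> S e \<in> \<phi> ` (e \<inter> S)"
proof -
  have "(SOME x. x \<in> e \<inter> S) \<in> e \<inter> S" using some_in_eq[of "e \<inter> S"] assms by blast
  then show ?thesis unfolding side_color_def by (rule imageI)
qed

lemma side_color_in_range:
  assumes "is_coloring k S D \<phi>" "e \<inter> S \<noteq> {}" shows "side_color \<phi> S e \<in> {1..k}"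
proof -
  obtain x where "x \<in> e \<inter> S" "side_color \<phi> S e = \<phi> x"
    using side_color_mem_image[OF assms(2)] by blast
  then show ?thesis using assms(1) unfolding is_coloring_def by auto
qed

lemma boundary_compl: "X \<subseteq> V \<Longrightarrow> boundary V E (V - X) = boundary V E X"
  unfolding boundary_def by (auto simp: double_diff)

locale small_cut =
  fixes V :: "'a set" and E F :: "'a set set" and k :: nat and X Y :: "'a set"
  assumes critical: "critical (k + 1) V E" and two_le_k: "2 \<le> k"
    and X_subset: "X \<subseteq> V" and X_nonempty: "X \<noteq> {}"
    and Y_eq: "Y = V - X" and Y_nonempty: "Y \<noteq> {}"
    and F_eq: "F = boundary V E X" and card_F_le: "card F \<le> k"
begin

abbreviation induced_coloring :: "'a set \<Rightarrow> ('a \<Rightarrow> nat) \<Rightarrow> bool" where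
  "induced_coloring S \<phi> \<equiv> is_coloring k S (induced_edges E S) \<phi>"

lemma swap_sides: "small_cut V E F k Y X"
  using critical two_le_k X_subset X_nonempty Y_eq Y_nonempty F_eq card_F_le boundary_compl[of X V E]
  by unfold_locales auto

lemma hypergraph: "hypergraph V E"
  by (rule critical_hypergraph[OF critical])

lemma edge_subset: "e \<in> E \<Longrightarrow> e \<subseteq> V"
  using hypergraph unfolding hypergraph_def by blast

lemma edge_nonempty: "e \<in> E \<Longrightarrow> e \<noteq> {}"
  using hypergraph unfolding hypergraph_def by fastforce

lemma X_Int_Y: "X \<inter> Y = {}"
  unfolding Y_eq by blast

lemma F_subset_E: "F \<subseteq> E"
  unfolding F_eq boundary_def by blast

lemma finite_F: "finite F"
  using hypergraph F_subset_E unfolding hypergraph_def by (meson finite_Pow_iff finite_subset)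

lemma F_meets_X: "e \<in> F \<Longrightarrow> e \<inter> X \<noteq> {}"
  unfolding F_eq boundary_def by blast

lemma F_meets_Y: "e \<in> F \<Longrightarrow> e \<inter> Y \<noteq> {}"
  unfolding F_eq Y_eq boundary_def by blast

lemma F_subset: "e \<in> F \<Longrightarrow> e \<subseteq> X \<union> Y"
  using edge_subset F_subset_E unfolding Y_eq by blast

lemma F_minus_X: "e \<in> F \<Longrightarrow> e - X = e \<inter> Y"
  using F_subset unfolding Y_eq by blast

lemma edge_in_F_iff: "e \<in> E \<Longrightarrow> e \<in> F \<longleftrightarrow> \<not> e \<subseteq> X \<and> \<not> e \<subseteq> Y"
  using edge_subset unfolding F_eq Y_eq boundary_def by blast

lemma X_vertex_in_edge:
  assumes "v \<in> X" shows "\<exists>e\<in>induced_edges E X \<union> F. v \<in> e"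
proof -
  obtain e where e: "e \<in> E" "v \<in> e"
    using critical_vertex_in_edge[OF critical] two_le_k X_subset assms by fastforce
  then have "e \<subseteq> X \<or> e \<in> F" using edge_in_F_iff[OF e(1)] X_Int_Y assms by blast
  then show ?thesis using e unfolding induced_edges_def by blast
qed

lemma Y_vertex_in_edge: "v \<in> Y \<Longrightarrow> \<exists>e\<in>induced_edges E Y \<union> F. v \<in> e"
  by (rule small_cut.X_vertex_in_edge[OF swap_sides])

lemma X_colorable: "\<exists>\<phi>. induced_coloring X \<phi>"
  using critical_induced_colorable[OF critical X_subset] Y_nonempty unfolding Y_eq colorable_def
  by blast

lemma Y_colorable: "\<exists>\<psi>. induced_coloring Y \<psi>"
  using small_cut.X_colorable[OF swap_sides] .

definition agreeing_edges :: "('a \<Rightarrow> nat) \<Rightarrow> ('a \<Rightarrow> nat) \<Rightarrow> 'a set set" where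
  "agreeing_edges \<phi> \<psi> = {e \<in> F. \<exists>a. (\<forall>x\<in>e \<inter> X. \<phi> x = a) \<and> (\<forall>y\<in>e \<inter> Y. \<psi> y = a)}"

text \<open>Gluing the two colorings gives no $k$-coloring of the critical hypergraph, and the
  monochromatic edge it leaves must cross the cut.\<close>
lemma agreeing_edges_nonempty:
  assumes \<phi>: "induced_coloring X \<phi>" and \<psi>: "induced_coloring Y \<psi>"
  shows "agreeing_edges \<phi> \<psi> \<noteq> {}"
proof -
  define c where "c v = (if v \<in> X then \<phi> v else \<psi> v)" for v
  have "\<not> is_coloring k V E c"
    using critical_not_colorable[OF critical] unfolding colorable_def by blast
  moreover have "\<forall>v\<in>V. c v \<in> {1..k}"
    using \<phi> \<psi> unfolding c_def Y_eq is_coloring_def by auto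
  ultimately obtain e where e: "e \<in> E" and mono: "\<forall>u\<in>e. \<forall>w\<in>e. c u = c w"
    unfolding is_coloring_def by blast
  have "\<not> e \<subseteq> X"
  proof
    assume "e \<subseteq> X"
    then obtain u w where "u \<in> e" "w \<in> e" "\<phi> u \<noteq> \<phi> w"
      using \<phi> e unfolding is_coloring_def induced_edges_def by blast
    then show False using mono \<open>e \<subseteq> X\<close> unfolding c_def by (metis subsetD)
  qed
  moreover have "\<not> e \<subseteq> Y"
  proof
    assume "e \<subseteq> Y"
    then obtain u w where "u \<in> e" "w \<in> e" "\<psi> u \<noteq> \<psi> w"
      using \<psi> e unfolding is_coloring_def induced_edges_def by blast
    then show False using mono \<open>e \<subseteq> Y\<close> X_Int_Y unfolding c_def by (metis disjoint_iff subsetD)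
  qed
  ultimately have "e \<in> F" using e edge_in_F_iff by blast
  obtain u where "u \<in> e" using \<open>\<not> e \<subseteq> X\<close> by blast
  have "\<phi> x = c u" if "x \<in> e \<inter> X" for x
    using that mono \<open>u \<in> e\<close> unfolding c_def by (metis IntD1 IntD2)
  moreover have "\<psi> y = c u" if "y \<in> e \<inter> Y" for y
    using that mono \<open>u \<in> e\<close> X_Int_Y unfolding c_def by (metis IntD1 IntD2 disjoint_iff)
  ultimately have "e \<in> agreeing_edges \<phi> \<psi>"
    using \<open>e \<in> F\<close> unfolding agreeing_edges_def by blast
  then show ?thesis by blast
qed

lemma induced_coloring_shift:
  "induced_coloring Y \<psi> \<Longrightarrow> s < k \<Longrightarrow> induced_coloring Y (cyclic_shift k s \<circ> \<psi>)"
  by (rule is_coloring_compose[OF _ cyclic_shift_inj_on cyclic_shift_image])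
    (auto simp: induced_edges_def)

lemma agreeing_edges_shift_unique:
  assumes \<psi>: "induced_coloring Y \<psi>" and "s < k" "t < k"
    and "e \<in> agreeing_edges \<phi> (cyclic_shift k s \<circ> \<psi>)" "e \<in> agreeing_edges \<phi> (cyclic_shift k t \<circ> \<psi>)"
  shows "s = t"
proof -
  obtain a where a: "\<forall>x\<in>e \<inter> X. \<phi> x = a" "\<forall>y\<in>e \<inter> Y. cyclic_shift k s (\<psi> y) = a" and "e \<in> F"
    using assms(4) unfolding agreeing_edges_def comp_def by blast
  obtain b where b: "\<forall>x\<in>e \<inter> X. \<phi> x = b" "\<forall>y\<in>e \<inter> Y. cyclic_shift k t (\<psi> y) = b"
    using assms(5) unfolding agreeing_edges_def comp_def by blast
  obtain x where "x \<in> e \<inter> X" using F_meets_X[OF \<open>e \<in> F\<close>] by blast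
  then have "a = b" using a(1) b(1) by metis
  obtain y where y: "y \<in> e \<inter> Y" using F_meets_Y[OF \<open>e \<in> F\<close>] by blast
  then have "\<psi> y \<in> {1..k}" using \<psi> unfolding is_coloring_def by blast
  moreover have "cyclic_shift k s (\<psi> y) = cyclic_shift k t (\<psi> y)" using a(2) b(2) y \<open>a = b\<close> by metis
  ultimately show ?thesis using cyclic_shift_eq_iff assms(2,3) by blast
qed

text \<open>The $k$ cyclic shifts of \<open>\<psi>\<close> have nonempty, pairwise disjoint sets of agreeing edges,
  all inside \<open>F\<close>, while \<open>card F \<le> k\<close>; so every bound in the count is tight.\<close>
lemma shifted_agreeing_edges_partition:
  assumes \<phi>: "induced_coloring X \<phi>" and \<psi>: "induced_coloring Y \<psi>"
  defines "A s \<equiv> agreeing_edges \<phi> (cyclic_shift k s \<circ> \<psi>)"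
  shows "card F = k" and "F = (\<Union>s<k. A s)" and "s < k \<Longrightarrow> card (A s) = 1"
proof -
  have sub: "A s \<subseteq> F" for s unfolding A_def agreeing_edges_def by blast
  have fin: "finite (A s)" for s using finite_subset[OF sub finite_F] .
  have ge_1: "1 \<le> card (A s)" if "s < k" for s
  proof -
    have "A s \<noteq> {}"
      unfolding A_def by (rule agreeing_edges_nonempty[OF \<phi> induced_coloring_shift[OF \<psi> that]])
    then show ?thesis using fin[of s] by (simp add: Suc_le_eq card_gt_0_iff)
  qed
  have disjoint: "\<forall>s\<in>{..<k}. \<forall>t\<in>{..<k}. s \<noteq> t \<longrightarrow> A s \<inter> A t = {}"
  proof (intro ballI impI equals0I)
    fix s t e assume "s \<in> {..<k}" "t \<in> {..<k}" "s \<noteq> t" "e \<in> A s \<inter> A t"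
    then show False using agreeing_edges_shift_unique[OF \<psi>, of s t e \<phi>] unfolding A_def by simp
  qed
  have card_union: "card (\<Union>s<k. A s) = (\<Sum>s<k. card (A s))"
    by (rule card_UN_disjoint[OF finite_lessThan]) (use fin disjoint in auto)
  have "(\<Sum>s<k. 1::nat) \<le> (\<Sum>s<k. card (A s))" by (rule sum_mono) (use ge_1 in simp)
  then have le1: "k \<le> (\<Sum>s<k. card (A s))" by simp
  have le2: "card (\<Union>s<k. A s) \<le> card F" by (rule card_mono[OF finite_F]) (use sub in blast)
  show card_F: "card F = k" using le1 le2 card_union card_F_le by linarith
  have "(\<Union>s<k. A s) = F"
    by (rule card_subset_eq[OF finite_F]) (use sub le1 le2 card_union card_F_le in \<open>blast, linarith\<close>)
  then show "F = (\<Union>s<k. A s)" by simp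
  have "(\<Sum>s<k. card (A s)) = k" using le1 le2 card_union card_F_le by linarith
  then have sum_eq: "(\<Sum>s<k. 1::nat) = (\<Sum>s<k. card (A s))" by simp
  show "card (A s) = 1" if "s < k"
    using sum_mono_inv[OF sum_eq, of s] ge_1 that by simp
qed

lemma card_F: "card F = k"
  using shifted_agreeing_edges_partition(1) X_colorable Y_colorable by blast

lemma edge_agrees_under_some_shift:
  assumes "induced_coloring X \<phi>" "induced_coloring Y \<psi>" "e \<in> F"
  shows "\<exists>s<k. e \<in> agreeing_edges \<phi> (cyclic_shift k s \<circ> \<psi>)"
  using shifted_agreeing_edges_partition(2)[OF assms(1,2)] assms(3) by blast

lemma card_agreeing_edges:
  assumes \<phi>: "induced_coloring X \<phi>" and \<psi>: "induced_coloring Y \<psi>"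
  shows "card (agreeing_edges \<phi> \<psi>) = 1"
proof -
  have "\<forall>y\<in>Y. (cyclic_shift k 0 \<circ> \<psi>) y = \<psi> y"
    using \<psi> cyclic_shift_0 unfolding is_coloring_def by auto
  then have "agreeing_edges \<phi> (cyclic_shift k 0 \<circ> \<psi>) = agreeing_edges \<phi> \<psi>"
    unfolding agreeing_edges_def by (metis (no_types, lifting) IntD2)
  then show ?thesis
    using shifted_agreeing_edges_partition(3)[OF \<phi> \<psi>, of 0] two_le_k by simp
qed

lemma X_side_monochromatic:
  assumes \<phi>: "induced_coloring X \<phi>" and "e \<in> F" "x \<in> e \<inter> X"
  shows "\<phi> x = side_color \<phi> X e"
proof -
  obtain \<psi> where "induced_coloring Y \<psi>" using Y_colorable by blast
  then obtain s where "e \<in> agreeing_edges \<phi> (cyclic_shift k s \<circ> \<psi>)"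
    using edge_agrees_under_some_shift \<phi> \<open>e \<in> F\<close> by blast
  then obtain a where a: "\<forall>x\<in>e \<inter> X. \<phi> x = a" unfolding agreeing_edges_def by blast
  then show ?thesis using side_color_eq[OF assms(3) a] assms(3) by simp
qed

lemma Y_side_monochromatic:
  "induced_coloring Y \<psi> \<Longrightarrow> e \<in> F \<Longrightarrow> y \<in> e \<inter> Y \<Longrightarrow> \<psi> y = side_color \<psi> Y e"
  by (rule small_cut.X_side_monochromatic[OF swap_sides])

text \<open>If the equivalence failed, a color permutation applied to \<open>\<psi>\<close> would make both edges
  agree, although exactly one edge agrees.\<close>
lemma side_colors_eq_iff:
  assumes \<phi>: "induced_coloring X \<phi>" and \<psi>: "induced_coloring Y \<psi>"
    and e: "e1 \<in> F" "e2 \<in> F" "e1 \<noteq> e2"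
  shows "side_color \<psi> Y e1 = side_color \<psi> Y e2 \<longleftrightarrow> side_color \<phi> X e1 \<noteq> side_color \<phi> X e2"
proof (rule ccontr)
  let ?a1 = "side_color \<phi> X e1" and ?a2 = "side_color \<phi> X e2"
  let ?b1 = "side_color \<psi> Y e1" and ?b2 = "side_color \<psi> Y e2"
  assume "\<not> ?thesis"
  then have eq: "?b1 = ?b2 \<longleftrightarrow> ?a1 = ?a2" by blast
  have range: "?a1 \<in> {1..k}" "?a2 \<in> {1..k}" "?b1 \<in> {1..k}" "?b2 \<in> {1..k}"
    using side_color_in_range[OF \<phi> F_meets_X] side_color_in_range[OF \<psi> F_meets_Y] e(1,2)
    by blast+
  obtain \<sigma> where \<sigma>: "\<sigma> permutes {1..k}" "\<sigma> ?b1 = ?a1" "\<sigma> ?b2 = ?a2"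
    by (rule permutes_two_points[OF range eq])
  have \<sigma>\<psi>: "induced_coloring Y (\<sigma> \<circ> \<psi>)"
    using permutes_inj_on[OF \<sigma>(1)] permutes_image[OF \<sigma>(1)]
    by (intro is_coloring_compose[OF \<psi>]) (auto simp: induced_edges_def)
  have "e \<in> agreeing_edges \<phi> (\<sigma> \<circ> \<psi>)" if "e \<in> F" "\<sigma> (side_color \<psi> Y e) = side_color \<phi> X e" for e
  proof -
    have "\<forall>x\<in>e \<inter> X. \<phi> x = side_color \<phi> X e"
      using X_side_monochromatic[OF \<phi> that(1)] by blast
    moreover have "\<forall>y\<in>e \<inter> Y. (\<sigma> \<circ> \<psi>) y = side_color \<phi> X e"
      using Y_side_monochromatic[OF \<psi> that(1)] that(2) by simp
    ultimately show ?thesis using that(1) unfolding agreeing_edges_def by blast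
  qed
  then have "e1 \<in> agreeing_edges \<phi> (\<sigma> \<circ> \<psi>)" "e2 \<in> agreeing_edges \<phi> (\<sigma> \<circ> \<psi>)"
    using e \<sigma> by blast+
  moreover obtain z where "agreeing_edges \<phi> (\<sigma> \<circ> \<psi>) = {z}"
    using card_agreeing_edges[OF \<phi> \<sigma>\<psi>] by (rule card_1_singletonE)
  ultimately show False using e(3) by blast
qed

abbreviation uniform_side :: "('a \<Rightarrow> nat) \<Rightarrow> 'a set \<Rightarrow> bool" where
  "uniform_side \<phi> S \<equiv> \<forall>e1\<in>F. \<forall>e2\<in>F. side_color \<phi> S e1 = side_color \<phi> S e2"

lemma two_edges_in_F:
  obtains e1 e2 where "e1 \<in> F" "e2 \<in> F" "e1 \<noteq> e2"
proof -
  have "2 \<le> card F" using card_F two_le_k by simp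
  then obtain e1 e2 where "e1 \<in> F" "e2 \<in> F" "e1 \<noteq> e2" by (rule two_le_cardE)
  then show ?thesis by (rule that)
qed

lemma one_side_uniform:
  assumes \<phi>: "induced_coloring X \<phi>" and \<psi>: "induced_coloring Y \<psi>"
  shows "uniform_side \<phi> X \<or> uniform_side \<psi> Y"
proof (cases "inj_on (side_color \<psi> Y) F")
  case True
  have "side_color \<phi> X e1 = side_color \<phi> X e2" if e: "e1 \<in> F" "e2 \<in> F" for e1 e2
  proof (cases "e1 = e2")
    case False
    then have "side_color \<psi> Y e1 \<noteq> side_color \<psi> Y e2" using inj_onD[OF True _ e] by blast
    then show ?thesis using side_colors_eq_iff[OF \<phi> \<psi> e False] by blast
  qed simp
  then show ?thesis by blast
next
  case False
  then obtain e1 e2 where e: "e1 \<in> F" "e2 \<in> F" "e1 \<noteq> e2" "side_color \<psi> Y e1 = side_color \<psi> Y e2"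
    unfolding inj_on_def by blast
  then have differ: "side_color \<phi> X e1 \<noteq> side_color \<phi> X e2"
    using side_colors_eq_iff[OF \<phi> \<psi> e(1-3)] by blast
  have same: "side_color \<psi> Y e = side_color \<psi> Y e1" if "e \<in> F" for e
  proof (rule ccontr)
    assume ne: "side_color \<psi> Y e \<noteq> side_color \<psi> Y e1"
    then have "e \<noteq> e1" "e \<noteq> e2" using e(4) by auto
    then have "side_color \<phi> X e = side_color \<phi> X e1" "side_color \<phi> X e = side_color \<phi> X e2"
      using side_colors_eq_iff[OF \<phi> \<psi> that e(1)] side_colors_eq_iff[OF \<phi> \<psi> that e(2)] ne e(4)
      by auto
    then show False using differ by simp
  qed
  have "side_color \<psi> Y e = side_color \<psi> Y e'" if "e \<in> F" "e' \<in> F" for e e'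
    using same[OF that(1)] same[OF that(2)] by simp
  then show ?thesis by blast
qed

lemma uniform_side_propagates:
  assumes \<phi>0: "induced_coloring X \<phi>0" "uniform_side \<phi>0 X" and \<phi>: "induced_coloring X \<phi>"
  shows "uniform_side \<phi> X"
proof -
  obtain \<psi> where \<psi>: "induced_coloring Y \<psi>" using Y_colorable by blast
  obtain e1 e2 where e: "e1 \<in> F" "e2 \<in> F" "e1 \<noteq> e2" by (rule two_edges_in_F)
  have "side_color \<psi> Y e1 \<noteq> side_color \<psi> Y e2"
  proof
    assume "side_color \<psi> Y e1 = side_color \<psi> Y e2"
    then have "side_color \<phi>0 X e1 \<noteq> side_color \<phi>0 X e2"
      using side_colors_eq_iff[OF \<phi>0(1) \<psi> e] by blast
    then show False using \<phi>0(2) e by blast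
  qed
  then have "\<not> uniform_side \<psi> Y" using e by blast
  then show ?thesis using one_side_uniform[OF \<phi> \<psi>] by blast
qed

end

section \<open>The rigid side and the rainbow side of the cut\<close>

locale oriented_cut = small_cut +
  assumes X_side_uniform:
    "is_coloring k X (induced_edges E X) \<phi> \<Longrightarrow> e1 \<in> F \<Longrightarrow> e2 \<in> F \<Longrightarrow>
      side_color \<phi> X e1 = side_color \<phi> X e2"

lemma (in small_cut) oriented_cut_or_swapped:
  "oriented_cut V E F k X Y \<or> oriented_cut V E F k Y X"
proof -
  obtain \<phi> \<psi> where \<phi>: "induced_coloring X \<phi>" and \<psi>: "induced_coloring Y \<psi>"
    using X_colorable Y_colorable by blast
  from one_side_uniform[OF \<phi> \<psi>] show ?thesis
  proof
    assume "uniform_side \<phi> X"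
    then have "oriented_cut V E F k X Y"
      using uniform_side_propagates[OF \<phi>]
      by (intro oriented_cut.intro small_cut_axioms oriented_cut_axioms.intro) blast
    then show ?thesis ..
  next
    assume "uniform_side \<psi> Y"
    then have "oriented_cut V E F k Y X"
      using small_cut.uniform_side_propagates[OF swap_sides \<psi>]
      by (intro oriented_cut.intro swap_sides oriented_cut_axioms.intro) blast
    then show ?thesis ..
  qed
qed

lemma oriented_cut_exists:
  assumes critical: "critical (k + 1) V E" and "2 \<le> k"
    and sep: "separating_edge_set V E F" and card_F_le: "card F \<le> k"
  shows "\<exists>X. oriented_cut V E F k X (V - X)"
proof -
  have "finite V" "E \<subseteq> Pow V" "F \<subseteq> E"
    using critical_hypergraph[OF critical] sep unfolding hypergraph_def separating_edge_set_def by auto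
  then have "finite F" by (meson finite_Pow_iff finite_subset)
  obtain X where X: "X \<noteq> {}" "X \<subset> V" "boundary V E X \<subseteq> F"
    using separating_edge_set_imp_cut[OF \<open>finite V\<close> sep] by blast
  have "card (boundary V E X) \<le> card F" by (rule card_mono[OF \<open>finite F\<close> X(3)])
  then have "small_cut V E (boundary V E X) k X (V - X)"
    using critical \<open>2 \<le> k\<close> X card_F_le by unfold_locales auto
  then have "card (boundary V E X) = k" by (rule small_cut.card_F)
  then have "boundary V E X = F"
    using card_subset_eq[OF \<open>finite F\<close> X(3)] \<open>card (boundary V E X) \<le> card F\<close> card_F_le by simp
  then interpret small_cut V E F k X "V - X"
    using \<open>small_cut V E (boundary V E X) k X (V - X)\<close> by simp
  from oriented_cut_or_swapped show ?thesis
  proof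
    assume "oriented_cut V E F k (V - X) X"
    moreover have "V - (V - X) = X" using X(2) by blast
    ultimately show ?thesis by (intro exI[of _ "V - X"]) simp
  qed blast
qed

context oriented_cut
begin

lemma Y_side_injective:
  assumes \<psi>: "induced_coloring Y \<psi>" shows "inj_on (side_color \<psi> Y) F"
proof (rule inj_onI, rule ccontr)
  fix e1 e2 assume e: "e1 \<in> F" "e2 \<in> F" "side_color \<psi> Y e1 = side_color \<psi> Y e2" "e1 \<noteq> e2"
  obtain \<phi> where \<phi>: "induced_coloring X \<phi>" using X_colorable by blast
  then have "side_color \<phi> X e1 \<noteq> side_color \<phi> X e2"
    using side_colors_eq_iff[OF \<phi> \<psi> e(1,2,4)] e(3) by blast
  then show False using X_side_uniform[OF \<phi> e(1,2)] by blast
qed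

lemma Y_side_colors:
  assumes \<psi>: "induced_coloring Y \<psi>" shows "side_color \<psi> Y ` F = {1..k}"
proof (rule card_subset_eq)
  show "side_color \<psi> Y ` F \<subseteq> {1..k}" using side_color_in_range[OF \<psi> F_meets_Y] by blast
  show "card (side_color \<psi> Y ` F) = card {1..k}"
    using card_image[OF Y_side_injective[OF \<psi>]] card_F by simp
qed simp

lemma Y_side_image:
  assumes \<psi>: "induced_coloring Y \<psi>" and "e \<in> F" shows "\<psi> ` (e \<inter> Y) = {side_color \<psi> Y e}"
  using Y_side_monochromatic[OF \<psi> \<open>e \<in> F\<close>] F_meets_Y[OF \<open>e \<in> F\<close>] by auto

lemma Y_side_takes_every_color:
  assumes \<psi>: "induced_coloring Y \<psi>" and "i \<in> {1..k}" shows "\<exists>e\<in>F. \<psi> ` (e \<inter> Y) = {i}"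
proof -
  obtain e where "e \<in> F" "i = side_color \<psi> Y e" using Y_side_colors[OF \<psi>] \<open>i \<in> {1..k}\<close> by blast
  then show ?thesis using Y_side_image[OF \<psi>] by blast
qed

lemma Y_boundary_card:
  assumes \<psi>: "induced_coloring Y \<psi>" shows "card (\<psi> ` (Y \<inter> \<Union>F)) = k"
proof -
  have "\<psi> ` (Y \<inter> \<Union>F) = (\<Union>e\<in>F. \<psi> ` (e \<inter> Y))" by blast
  also have "\<dots> = (\<Union>e\<in>F. {side_color \<psi> Y e})" using Y_side_image[OF \<psi>] by simp
  also have "\<dots> = side_color \<psi> Y ` F" by blast
  finally show ?thesis using Y_side_colors[OF \<psi>] by simp
qed

lemma X_boundary_monochromatic:
  assumes \<phi>: "induced_coloring X \<phi>" shows "\<exists>a. \<phi> ` (X \<inter> \<Union>F) = {a}"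
proof -
  obtain e0 where "e0 \<in> F" using two_edges_in_F by blast
  have same: "\<phi> x = side_color \<phi> X e0" if x: "x \<in> X \<inter> \<Union>F" for x
  proof -
    obtain e where e: "e \<in> F" "x \<in> e \<inter> X" using x by blast
    then have "\<phi> x = side_color \<phi> X e" by (rule X_side_monochromatic[OF \<phi>])
    also have "\<dots> = side_color \<phi> X e0" by (rule X_side_uniform[OF \<phi> e(1) \<open>e0 \<in> F\<close>])
    finally show ?thesis .
  qed
  have "\<phi> ` (X \<inter> \<Union>F) = (\<lambda>_. side_color \<phi> X e0) ` (X \<inter> \<Union>F)"
    using same by (rule image_cong[OF refl])
  also have "\<dots> = {side_color \<phi> X e0}"
    using F_meets_X[OF \<open>e0 \<in> F\<close>] \<open>e0 \<in> F\<close> by (auto simp: image_constant_conv)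
  finally show ?thesis ..
qed

lemma Y_boundary_vertex_in_unique_edge:
  assumes "y \<in> Y \<inter> \<Union>F" shows "card {e \<in> F. y \<in> e} = 1"
proof -
  obtain \<psi> where \<psi>: "induced_coloring Y \<psi>" using Y_colorable by blast
  obtain e0 where e0: "e0 \<in> F" "y \<in> e0" using assms by blast
  have "e = e0" if "e \<in> F" "y \<in> e" for e
  proof -
    have "y \<in> e \<inter> Y" "y \<in> e0 \<inter> Y" using that e0 assms by blast+
    then have "side_color \<psi> Y e = side_color \<psi> Y e0"
      using Y_side_monochromatic[OF \<psi> that(1)] Y_side_monochromatic[OF \<psi> e0(1)] by metis
    then show ?thesis using inj_onD[OF Y_side_injective[OF \<psi>]] that(1) e0(1) by blast
  qed
  then have "{e \<in> F. y \<in> e} = {e0}" using e0 by blast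
  then show ?thesis by simp
qed

text \<open>Restricted to \<open>Y\<close>, \<open>c\<close> paints the \<open>Y\<close>-side of some edge of \<open>F\<close> in any prescribed
  color; if \<open>X \<inter> \<Union>F\<close> were monochromatic, that edge would be monochromatic.\<close>
lemma X_boundary_not_monochromatic:
  assumes c: "is_coloring k V E' c" and "F \<subseteq> E'" "induced_edges E Y \<subseteq> E'"
  shows "\<exists>u\<in>X \<inter> \<Union>F. \<exists>w\<in>X \<inter> \<Union>F. c u \<noteq> c w"
proof (rule ccontr)
  assume "\<not> ?thesis"
  then have const: "\<forall>u\<in>X \<inter> \<Union>F. \<forall>w\<in>X \<inter> \<Union>F. c u = c w" by blast
  have "Y \<subseteq> V" unfolding Y_eq by blast
  then have cY: "induced_coloring Y c" using assms(3) by (rule is_coloring_subset[OF c])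
  obtain e0 where "e0 \<in> F" using two_edges_in_F by blast
  then obtain x0 where x0: "e0 \<in> F" "x0 \<in> e0 \<inter> X" using F_meets_X by blast
  have "c x0 \<in> {1..k}" using c x0 X_subset unfolding is_coloring_def by blast
  then obtain e where e: "e \<in> F" "c ` (e \<inter> Y) = {c x0}"
    using Y_side_takes_every_color[OF cY] by blast
  have "c z = c x0" if "z \<in> e" for z
  proof (cases "z \<in> X")
    case True
    then show ?thesis using const x0 e(1) that by blast
  next
    case False
    then have "z \<in> e \<inter> Y" using F_subset[OF e(1)] that by blast
    then show ?thesis using e(2) by blast
  qed
  moreover obtain u w where "u \<in> e" "w \<in> e" "c u \<noteq> c w"
    using c e(1) assms(2) unfolding is_coloring_def by blast
  ultimately show False by simp
qed

lemma X_side_with_boundary_edge_deleted_colorable: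
  assumes "f \<in> insert (X \<inter> \<Union>F) (induced_edges E X)"
  shows "colorable k X (insert (X \<inter> \<Union>F) (induced_edges E X) - {f})"
    (is "colorable k X (?D - {f})")
proof (cases "f = X \<inter> \<Union>F")
  case True
  obtain \<phi> where "induced_coloring X \<phi>" using X_colorable by blast
  then have "is_coloring k X (?D - {f}) \<phi>" by (rule is_coloring_subset) (auto simp: True)
  then show ?thesis unfolding colorable_def by blast
next
  case False
  then have f: "f \<in> E" "f \<subseteq> X" "f \<noteq> {}"
    using assms edge_nonempty unfolding induced_edges_def by auto
  obtain c where c: "is_coloring k V (E - {f}) c"
    using critical_edge_deleted_colorable[OF critical f(1)] unfolding colorable_def by blast
  have "F \<subseteq> E - {f}" using F_subset_E F_meets_Y f(2) unfolding Y_eq by blast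
  moreover have "induced_edges E Y \<subseteq> E - {f}" using f(2,3) unfolding induced_edges_def Y_eq by blast
  ultimately have boundary_edge: "\<exists>u\<in>X \<inter> \<Union>F. \<exists>w\<in>X \<inter> \<Union>F. c u \<noteq> c w"
    by (rule X_boundary_not_monochromatic[OF c])
  have "is_coloring k X (?D - {f}) c"
    unfolding is_coloring_def
  proof (intro conjI ballI)
    fix v assume "v \<in> X"
    then show "c v \<in> {1..k}" using c X_subset unfolding is_coloring_def by blast
  next
    fix g assume "g \<in> ?D - {f}"
    then have "g = X \<inter> \<Union>F \<or> g \<in> E - {f}" unfolding induced_edges_def by blast
    then show "\<exists>u\<in>g. \<exists>w\<in>g. c u \<noteq> c w" using boundary_edge c unfolding is_coloring_def by blast
  qed
  then show ?thesis unfolding colorable_def by blast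
qed

lemma X_side_with_boundary_edge_critical:
  assumes two: "2 \<le> card (X \<inter> \<Union>F)"
  shows "critical (k + 1) X (insert (X \<inter> \<Union>F) (induced_edges E X))"
    (is "critical _ _ ?D")
proof (rule critical_intro)
  show "hypergraph X ?D"
    using hypergraph X_subset two unfolding hypergraph_def induced_edges_def
    by (auto intro: finite_subset)
  show "\<not> colorable k X ?D"
  proof
    assume "colorable k X ?D"
    then obtain c where c: "is_coloring k X ?D c" unfolding colorable_def by blast
    then have "induced_coloring X c" by (rule is_coloring_subset) auto
    then obtain a where "c ` (X \<inter> \<Union>F) = {a}" using X_boundary_monochromatic by blast
    moreover obtain u w where "u \<in> X \<inter> \<Union>F" "w \<in> X \<inter> \<Union>F" "c u \<noteq> c w"
      using c unfolding is_coloring_def by blast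
    ultimately show False by (metis imageI singletonD)
  qed
  show "\<forall>v\<in>X. \<exists>f\<in>?D. v \<in> f"
  proof
    fix v assume "v \<in> X"
    then obtain e where e: "e \<in> induced_edges E X \<union> F" "v \<in> e" using X_vertex_in_edge by blast
    then have "e \<in> ?D \<or> v \<in> X \<inter> \<Union>F" using \<open>v \<in> X\<close> by blast
    then show "\<exists>f\<in>?D. v \<in> f" using e(2) by blast
  qed
  show "\<forall>f\<in>?D. colorable k X (?D - {f})"
    using X_side_with_boundary_edge_deleted_colorable by blast
qed

text \<open>Contracting \<open>X\<close> to the new vertex \<open>None\<close> turns \<open>G[Y]\<close> together with the edges of \<open>F\<close>
  into the hypergraph of part (d).\<close>
definition contract_edge :: "'a set \<Rightarrow> 'a option set" where
  "contract_edge e = (if e \<in> F then insert None (Some ` (e - X)) else Some ` e)"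

definition contraction_vertices :: "'a option set" where
  "contraction_vertices = insert None (Some ` Y)"

definition contraction_edges :: "'a option set set" where
  "contraction_edges = contract_edge ` (induced_edges E Y \<union> F)"

lemma contract_edge_inside: "e \<in> induced_edges E Y \<Longrightarrow> contract_edge e = Some ` e"
  using F_meets_X X_Int_Y unfolding contract_edge_def induced_edges_def by auto

lemma contract_edge_crossing: "e \<in> F \<Longrightarrow> contract_edge e = insert None (Some ` (e \<inter> Y))"
  by (simp add: contract_edge_def F_minus_X)

lemma contraction_edges_eq:
  "contraction_edges =
     (\<lambda>e. Some ` e) ` induced_edges E Y \<union> (\<lambda>e. insert None (Some ` (e - X))) ` F"
proof -
  have "contract_edge ` induced_edges E Y = (\<lambda>e. Some ` e) ` induced_edges E Y"
    by (rule image_cong[OF refl contract_edge_inside])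
  moreover have "contract_edge ` F = (\<lambda>e. insert None (Some ` (e - X))) ` F"
    by (rule image_cong) (simp_all add: contract_edge_def)
  ultimately show ?thesis unfolding contraction_edges_def image_Un by simp
qed

lemma contraction_hypergraph: "hypergraph contraction_vertices contraction_edges"
  unfolding hypergraph_def
proof (intro conjI ballI)
  have "finite V" using hypergraph unfolding hypergraph_def by blast
  then show "finite contraction_vertices" unfolding contraction_vertices_def by (simp add: Y_eq)
  have "contract_edge e \<subseteq> contraction_vertices" if "e \<in> induced_edges E Y \<union> F" for e
  proof (cases "e \<in> F")
    case True
    then show ?thesis unfolding contract_edge_crossing[OF True] contraction_vertices_def by blast
  next
    case False
    then have "e \<in> induced_edges E Y" using that by blast
    then show ?thesis
      unfolding contract_edge_inside[OF \<open>e \<in> induced_edges E Y\<close>] contraction_vertices_def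
        induced_edges_def by blast
  qed
  then show "contraction_edges \<subseteq> Pow contraction_vertices" unfolding contraction_edges_def by blast
next
  fix g assume "g \<in> contraction_edges"
  then obtain e where e: "e \<in> induced_edges E Y \<union> F" "g = contract_edge e"
    unfolding contraction_edges_def by blast
  have "finite e" "e \<in> E" using e(1) hypergraph F_subset_E edge_subset
    unfolding hypergraph_def induced_edges_def by (auto intro: finite_subset)
  show "2 \<le> card g"
  proof (cases "e \<in> F")
    case True
    have "e \<inter> Y \<noteq> {}" by (rule F_meets_Y[OF True])
    then have "1 \<le> card (e \<inter> Y)" using \<open>finite e\<close> by (simp add: Suc_le_eq card_gt_0_iff)
    then show ?thesis
      using e(2) contract_edge_crossing[OF True] card_image[of Some "e \<inter> Y"] \<open>finite e\<close>
      by (simp add: card_insert_if)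
  next
    case False
    then have "g = Some ` e" using e contract_edge_inside by blast
    then show ?thesis using \<open>e \<in> E\<close> hypergraph card_image[of Some e] unfolding hypergraph_def by simp
  qed
qed

lemma contraction_not_colorable: "\<not> colorable k contraction_vertices contraction_edges"
proof
  assume "colorable k contraction_vertices contraction_edges"
  then obtain c where c: "is_coloring k contraction_vertices contraction_edges c"
    unfolding colorable_def by blast
  have "induced_coloring Y (c \<circ> Some)"
    unfolding is_coloring_def
  proof (intro conjI ballI)
    fix y assume "y \<in> Y"
    then have "Some y \<in> contraction_vertices" unfolding contraction_vertices_def by blast
    then show "(c \<circ> Some) y \<in> {1..k}" using c unfolding is_coloring_def by simp
  next
    fix e assume "e \<in> induced_edges E Y"
    then have "Some ` e \<in> contraction_edges"
      unfolding contraction_edges_def using contract_edge_inside by (metis UnI1 image_eqI)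
    then obtain u w where "u \<in> Some ` e" "w \<in> Some ` e" "c u \<noteq> c w"
      using c unfolding is_coloring_def by blast
    then show "\<exists>u\<in>e. \<exists>w\<in>e. (c \<circ> Some) u \<noteq> (c \<circ> Some) w" by auto
  qed
  moreover have "c None \<in> {1..k}" using c unfolding is_coloring_def contraction_vertices_def by blast
  ultimately obtain e where e: "e \<in> F" "(c \<circ> Some) ` (e \<inter> Y) = {c None}"
    using Y_side_takes_every_color by blast
  then have "c ` contract_edge e = {c None}"
    using contract_edge_crossing[OF e(1)] by (simp add: image_comp)
  moreover have "contract_edge e \<in> contraction_edges"
    using e(1) unfolding contraction_edges_def by blast
  then obtain u w where "u \<in> contract_edge e" "w \<in> contract_edge e" "c u \<noteq> c w"
    using c unfolding is_coloring_def by blast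
  ultimately show False by (metis imageI singletonD)
qed

lemma contraction_covers: "\<forall>v\<in>contraction_vertices. \<exists>g\<in>contraction_edges. v \<in> g"
proof
  fix v assume "v \<in> contraction_vertices"
  then consider (new) "v = None" | (old) y where "y \<in> Y" "v = Some y"
    unfolding contraction_vertices_def by blast
  then show "\<exists>g\<in>contraction_edges. v \<in> g"
  proof cases
    case new
    obtain e0 where "e0 \<in> F" using two_edges_in_F by blast
    then have "contract_edge e0 \<in> contraction_edges" unfolding contraction_edges_def by blast
    moreover have "v \<in> contract_edge e0" using new \<open>e0 \<in> F\<close> by (simp add: contract_edge_def)
    ultimately show ?thesis by (rule bexI[rotated])
  next
    case old
    then obtain e where e: "e \<in> induced_edges E Y \<union> F" "y \<in> e" using Y_vertex_in_edge by blast
    then have "contract_edge e \<in> contraction_edges" unfolding contraction_edges_def by blast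
    moreover have "v \<in> contract_edge e"
      using e old contract_edge_inside contract_edge_crossing by auto
    ultimately show ?thesis by (rule bexI[rotated])
  qed
qed

text \<open>Restricted to \<open>X\<close>, the coloring \<open>c\<close> is constant on \<open>X \<inter> \<Union>F\<close>; giving \<open>None\<close> that
  color keeps every contracted edge other than the one coming from \<open>f\<close> non-monochromatic.\<close>
lemma contracted_coloring:
  assumes "f \<in> E" "\<not> f \<subseteq> X" and c: "is_coloring k V (E - {f}) c"
  shows "colorable k contraction_vertices (contract_edge ` (induced_edges E Y \<union> F - {f}))"
proof -
  have "induced_coloring X c"
    using X_subset assms(2) by (intro is_coloring_subset[OF c]) (auto simp: induced_edges_def)
  then obtain a where a: "c ` (X \<inter> \<Union>F) = {a}" using X_boundary_monochromatic by blast
  then obtain x where "x \<in> X" "c x = a" by blast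
  then have "a \<in> {1..k}" using c X_subset unfolding is_coloring_def by blast
  define c' where "c' v = (case v of None \<Rightarrow> a | Some y \<Rightarrow> c y)" for v
  have "is_coloring k contraction_vertices (contract_edge ` (induced_edges E Y \<union> F - {f})) c'"
    unfolding is_coloring_def
  proof (intro conjI ballI)
    fix v assume "v \<in> contraction_vertices"
    then consider "v = None" | y where "y \<in> Y" "v = Some y"
      unfolding contraction_vertices_def by blast
    then show "c' v \<in> {1..k}"
      by cases (use c \<open>a \<in> {1..k}\<close> in \<open>auto simp: c'_def is_coloring_def Y_eq\<close>)
  next
    fix g assume "g \<in> contract_edge ` (induced_edges E Y \<union> F - {f})"
    then obtain e where e: "e \<in> induced_edges E Y \<union> F" "e \<noteq> f" "g = contract_edge e" by blast
    then obtain u w where uw: "u \<in> e" "w \<in> e" "c u \<noteq> c w"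
      using c F_subset_E unfolding is_coloring_def induced_edges_def by blast
    show "\<exists>u\<in>g. \<exists>w\<in>g. c' u \<noteq> c' w"
    proof (cases "e \<in> F")
      case False
      then have "Some u \<in> g" "Some w \<in> g" "c' (Some u) \<noteq> c' (Some w)"
        using e contract_edge_inside uw by (auto simp: c'_def)
      then show ?thesis by blast
    next
      case True
      have "c z = a" if "z \<in> e \<inter> X" for z using that True a by blast
      then obtain y where "y \<in> e \<inter> Y" "c y \<noteq> a" using uw F_subset[OF True] by blast
      then have "None \<in> g" "Some y \<in> g" "c' None \<noteq> c' (Some y)"
        using e(3) contract_edge_crossing[OF True] by (auto simp: c'_def)
      then show ?thesis by blast
    qed
  qed
  then show ?thesis unfolding colorable_def by blast
qed

lemma contraction_edge_deleted_colorable: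
  assumes "g \<in> contraction_edges"
  shows "colorable k contraction_vertices (contraction_edges - {g})"
proof -
  obtain f where f: "f \<in> induced_edges E Y \<union> F" "g = contract_edge f"
    using assms unfolding contraction_edges_def by blast
  then have "f \<in> E" "\<not> f \<subseteq> X"
    using F_subset_E F_meets_Y X_Int_Y edge_nonempty unfolding induced_edges_def by blast+
  moreover have "contraction_edges - {g} \<subseteq> contract_edge ` (induced_edges E Y \<union> F - {f})"
    using image_diff_subset[of contract_edge _ "{f}"] f(2) unfolding contraction_edges_def by simp
  ultimately show ?thesis
    using critical_edge_deleted_colorable[OF critical] contracted_coloring is_coloring_subset
    unfolding colorable_def by (meson order_refl)
qed

lemma contraction_critical: "critical (k + 1) contraction_vertices contraction_edges"
  by (rule critical_intro[OF contraction_hypergraph contraction_not_colorable contraction_covers])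
    (use contraction_edge_deleted_colorable in blast)

lemma cut_properties:
  "X \<noteq> {} \<and> X \<subset> V \<and> F = boundary V E X \<and>
    (let Y = V - X; XF = X \<inter> \<Union>F; YF = Y \<inter> \<Union>F in
      (\<forall>\<phi>. is_coloring k X (induced_edges E X) \<phi> \<longrightarrow> card (\<phi> ` XF) = 1) \<and>
      (\<forall>\<phi>. is_coloring k Y (induced_edges E Y) \<phi> \<longrightarrow>
        card (\<phi> ` YF) = k \<and> (\<forall>i\<in>{1..k}. \<exists>e\<in>F. \<phi> ` (e \<inter> Y) = {i})) \<and>
      (\<forall>y\<in>YF. card {e\<in>F. y \<in> e} = 1) \<and>
      (card XF \<ge> 2 \<longrightarrow> critical (k + 1) X (insert XF (induced_edges E X))) \<and>
      critical (k + 1) (insert None (Some ` Y))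
        ((\<lambda>e. Some ` e) ` induced_edges E Y \<union> (\<lambda>e. insert None (Some ` (e - X))) ` F))"
  unfolding Let_def Y_eq[symmetric]
proof (intro conjI allI impI ballI)
  show "X \<noteq> {}" "F = boundary V E X" by (fact X_nonempty, fact F_eq)
  show "X \<subset> V" using X_subset Y_nonempty unfolding Y_eq by blast
  show "card (\<phi> ` (X \<inter> \<Union>F)) = 1" if "induced_coloring X \<phi>" for \<phi>
    using X_boundary_monochromatic[OF that] by auto
  show "card (\<psi> ` (Y \<inter> \<Union>F)) = k" if "induced_coloring Y \<psi>" for \<psi>
    using Y_boundary_card[OF that] .
  show "\<exists>e\<in>F. \<psi> ` (e \<inter> Y) = {i}" if "induced_coloring Y \<psi>" "i \<in> {1..k}" for \<psi> i
    using Y_side_takes_every_color[OF that] .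
  show "card {e \<in> F. y \<in> e} = 1" if "y \<in> Y \<inter> \<Union>F" for y
    using Y_boundary_vertex_in_unique_edge[OF that] .
  show "critical (k + 1) X (insert (X \<inter> \<Union>F) (induced_edges E X))" if "2 \<le> card (X \<inter> \<Union>F)"
    using X_side_with_boundary_edge_critical[OF that] .
  show "critical (k + 1) (insert None (Some ` Y))
      ((\<lambda>e. Some ` e) ` induced_edges E Y \<union> (\<lambda>e. insert None (Some ` (e - X))) ` F)"
    using contraction_critical unfolding contraction_vertices_def contraction_edges_eq .
qed

end

theorem theorem12:
  fixes V :: "'a set" and E F :: "'a set set" and k :: nat
  assumes "critical (k + 1) V E"
    and "k \<ge> 2"
    and "separating_edge_set V E F"
    and "card F \<le> k"
  shows "card F = k \<and>
    (\<exists>X. X \<noteq> {} \<and> X \<subset> V \<and> F = boundary V E X \<and>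
       (let Y = V - X; XF = X \<inter> \<Union>F; YF = Y \<inter> \<Union>F in
         (\<forall>\<phi>. is_coloring k X (induced_edges E X) \<phi> \<longrightarrow> card (\<phi> ` XF) = 1) \<and>
         (\<forall>\<phi>. is_coloring k Y (induced_edges E Y) \<phi> \<longrightarrow>
              card (\<phi> ` YF) = k \<and> (\<forall>i\<in>{1..k}. \<exists>e\<in>F. \<phi> ` (e \<inter> Y) = {i})) \<and>
         (\<forall>y\<in>YF. card {e\<in>F. y \<in> e} = 1) \<and>
         (card XF \<ge> 2 \<longrightarrow> critical (k + 1) X (insert XF (induced_edges E X))) \<and>
         critical (k + 1) (insert None (Some ` Y))
           ((\<lambda>e. Some ` e) ` induced_edges E Y \<union>
            (\<lambda>e. insert None (Some ` (e - X))) ` F)))"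
proof -
  obtain X where "oriented_cut V E F k X (V - X)"
    using oriented_cut_exists[OF assms] by blast
  then interpret oriented_cut V E F k X "V - X" .
  show ?thesis using card_F cut_properties by blast
qed

end
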